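(* Let $c_0,c_1$ be convex loops with length measures $\mu_0,\mu_1$, and suppose that for some $j\in\{0,1\}$ the loop $c_j$ is degenerate with $\mu_j=r\delta_{x_j}+r\delta_{-x_j}$ ($r>0$, $x_j\in S^1$). Let $i$ be the other index. Then $\mu_0,\mu_1$ are weakly admissible if and only if $\mu_i(\{\pm\,\mathrm{i}x_j\})=0$.
   Context: $S^1$ is the unit circle in $\mathbb{C}$ (identified with $\mathbb{R}/2\pi\mathbb{Z}$, arc-length measure $\mathrm{d}s$, geodesic distance $\operatorname{dist}$ with values in $[0,\pi]$). A convex loop is $c\in W^{1,1}(S^1,\mathbb{C})$ with $c'\neq0$ a.e. whose image is the boundary of a convex set in $\mathbb{C}$, positively oriented; its length measure is $\mu_c:=(T_c)_\#(|c'|\,\mathrm{d}s)$, $T_c=c'/|c'|$. Degenerate means $\mu_c=r\delta_x+r\delta_{-x}$ for some $r>0$, $x\in S^1$. Two measures $\mu_0,\mu_1\in\mathcal{M}_+(S^1)$ are weakly admissible if $\mu_i(\{x\in S^1:\operatorname{dist}(x,\operatorname{supp}\mu_j)\ge\pi/2\})=0$ for $\{i,j\}=\{0,1\}$. *)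

theory Defs
  imports "HOL-Analysis.Analysis" "HOL-Complex_Analysis.Winding_Numbers"
begin

text \<open>The circle S^1 is represented as the unit circle  sphere 0 1  in the complex plane.
  A loop on S^1 = R/2piZ is a 2pi-periodic function  c :: real => complex.
  W^{1,1} regularity is expressed by an integrable function  d  (the a.e. derivative c')
  with  c t = c 0 + integral {0..t} d.\<close>

definition sdist :: "complex \<Rightarrow> complex \<Rightarrow> real" where
  "sdist x y = arccos (Re (cnj x * y))"

definition convex_loop :: "(real \<Rightarrow> complex) \<Rightarrow> (real \<Rightarrow> complex) \<Rightarrow> bool" where
  "convex_loop c d \<longleftrightarrow>
     (\<forall>t. c (t + 2 * pi) = c t) \<and>
     d absolutely_integrable_on {0..2 * pi} \<and>
     (\<forall>t\<in>{0..2 * pi}. c t = c 0 + integral {0..t} d) \<and>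
     {s \<in> {0..2 * pi}. d s = 0} \<in> null_sets lebesgue \<and>
     (\<exists>K. convex K \<and> frontier K = c ` {0..2 * pi} \<and>
        (\<forall>z\<in>interior K. winding_number (\<lambda>t. c (2 * pi * t)) z = 1))"

text \<open>Length measure  mu_c = (T_c)_# (|c'| ds),  T_c = c'/|c'|, as a Borel measure on the plane
  (concentrated on the unit circle).\<close>
definition length_measure :: "(real \<Rightarrow> complex) \<Rightarrow> complex measure" where
  "length_measure d =
     distr (density (lebesgue_on {0..2 * pi}) (\<lambda>s. ennreal (norm (d s)))) borel
           (\<lambda>s. d s / complex_of_real (norm (d s)))"

definition supp_S1 :: "complex measure \<Rightarrow> complex set" where
  "supp_S1 \<mu> = {x \<in> sphere 0 1. \<forall>e>0. emeasure \<mu> (ball x e \<inter> sphere 0 1) > 0}"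

definition weakly_admissible :: "complex measure \<Rightarrow> complex measure \<Rightarrow> bool" where
  "weakly_admissible \<mu>0 \<mu>1 \<longleftrightarrow>
     emeasure \<mu>0 {x \<in> sphere 0 1. (INF y\<in>supp_S1 \<mu>1. sdist x y) \<ge> pi / 2} = 0 \<and>
     emeasure \<mu>1 {x \<in> sphere 0 1. (INF y\<in>supp_S1 \<mu>0. sdist x y) \<ge> pi / 2} = 0"

definition degenerate_with :: "complex measure \<Rightarrow> real \<Rightarrow> complex \<Rightarrow> bool" where
  "degenerate_with \<mu> r x \<longleftrightarrow>
     (\<forall>A \<in> sets (borel :: complex measure). A \<subseteq> sphere 0 1 \<longrightarrow>
        emeasure \<mu> A = ennreal r * indicator A x + ennreal r * indicator A (- x))"

end

theory Submission
  imports Defs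
begin

text \<open>The degenerate measure \<open>\<mu>\<^sub>j\<close> has support \<open>{x, -x}\<close>, and the points of the circle at
  distance at least \<open>\<pi>/2\<close> from both are exactly \<open>\<plusminus>\<i>x\<close>; this is one half of weak admissibility.
  For the other half, if the support of \<open>\<mu>\<^sub>i\<close> missed the open half-circle around \<open>x\<close>, then
  \<open>Re (x\<^sup>* c\<^sub>i')\<close> would be a.e. nonpositive with integral \<open>0\<close> (the loop closes up), hence a.e. zero;
  as \<open>c\<^sub>i' \<noteq> 0\<close> a.e., all of \<open>\<mu>\<^sub>i\<close> would sit on \<open>{\<plusminus>\<i>x}\<close>. So if \<open>\<mu>\<^sub>i{\<plusminus>\<i>x} = 0\<close>, neither \<open>x\<close>
  nor \<open>-x\<close> is far from the support of \<open>\<mu>\<^sub>i\<close>, and \<open>\<mu>\<^sub>j\<close>, living on \<open>{x, -x}\<close>, does not charge the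
  far set.\<close>

lemma sphere_orthogonal_iff:
  fixes x z :: complex
  assumes "x \<in> sphere 0 1" "z \<in> sphere 0 1"
  shows "Re (cnj x * z) = 0 \<longleftrightarrow> z = \<i> * x \<or> z = - (\<i> * x)"
proof
  assume orth: "Re (cnj x * z) = 0"
  define w where "w = cnj x * z"
  have "cmod w = 1" using assms by (simp add: w_def norm_mult)
  then have "(Re w)\<^sup>2 + (Im w)\<^sup>2 = 1" by (metis cmod_power2 one_power2)
  then have "Im w = 1 \<or> Im w = -1" using orth by (simp add: w_def power2_eq_1_iff)
  then have "w = \<i> \<or> w = -\<i>" using orth by (auto simp: w_def complex_eq_iff)
  moreover have "z = x * w"
    using assms(1) by (simp add: w_def complex_norm_square[symmetric] mult.assoc[symmetric])
  ultimately show "z = \<i> * x \<or> z = - (\<i> * x)" by (auto simp: algebra_simps)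
qed auto

lemma abs_Re_cnj_mult_le_1:
  fixes x y :: complex
  assumes "x \<in> sphere 0 1" "y \<in> sphere 0 1"
  shows "\<bar>Re (cnj x * y)\<bar> \<le> 1"
  using abs_Re_le_cmod[of "cnj x * y"] assms by (simp add: norm_mult)

lemma sdist_nonneg:
  assumes "x \<in> sphere 0 1" "y \<in> sphere 0 1"
  shows "0 \<le> sdist x y"
  using abs_Re_cnj_mult_le_1[OF assms] by (simp add: sdist_def arccos_lbound)

lemma sdist_ge_half_pi_iff:
  assumes "x \<in> sphere 0 1" "y \<in> sphere 0 1"
  shows "pi / 2 \<le> sdist x y \<longleftrightarrow> Re (cnj x * y) \<le> 0"
  using arccos_le_mono[of 0 "Re (cnj x * y)"] abs_Re_cnj_mult_le_1[OF assms]
  by (simp add: sdist_def)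

definition far_S1 :: "complex set \<Rightarrow> complex set" where
  "far_S1 S = {z \<in> sphere 0 1. pi / 2 \<le> (INF y\<in>S. sdist z y)}"

lemma weakly_admissible_iff_far_S1:
  "weakly_admissible \<mu>0 \<mu>1 \<longleftrightarrow>
     emeasure \<mu>0 (far_S1 (supp_S1 \<mu>1)) = 0 \<and> emeasure \<mu>1 (far_S1 (supp_S1 \<mu>0)) = 0"
  by (simp add: weakly_admissible_def far_S1_def)

lemma far_S1_antipodal:
  assumes x: "x \<in> sphere 0 1"
  shows "far_S1 {x, -x} = {\<i> * x, - (\<i> * x)}"
proof -
  have "z \<in> far_S1 {x, -x} \<longleftrightarrow> Re (cnj x * z) = 0" if z: "z \<in> sphere 0 1" for z
  proof -
    have "z \<in> far_S1 {x, -x} \<longleftrightarrow> pi / 2 \<le> sdist z x \<and> pi / 2 \<le> sdist z (-x)"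
      using z by (simp add: far_S1_def cInf_eq_Min)
    also have "\<dots> \<longleftrightarrow> Re (cnj z * x) \<le> 0 \<and> Re (cnj z * (-x)) \<le> 0"
      using x z sdist_ge_half_pi_iff[OF z x] sdist_ge_half_pi_iff[OF z, of "-x"] by simp
    also have "\<dots> \<longleftrightarrow> Re (cnj x * z) = 0"
      by (auto simp: algebra_simps)
    finally show ?thesis .
  qed
  then show ?thesis
    using sphere_orthogonal_iff[OF x] x by (auto simp: far_S1_def norm_mult)
qed

lemma notin_far_S1:
  assumes "S \<subseteq> sphere 0 1" "y \<in> S" "z \<in> sphere 0 1" "0 < Re (cnj z * y)"
  shows "z \<notin> far_S1 S"
proof -
  have "bdd_below ((\<lambda>y. sdist z y) ` S)"
    using assms(1,3) sdist_nonneg by (auto intro!: bdd_belowI2[of _ 0])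
  then have "(INF y\<in>S. sdist z y) \<le> sdist z y" using assms(2) by (rule cINF_lower)
  moreover have "sdist z y < pi / 2"
    using sdist_ge_half_pi_iff[of z y] assms by auto
  ultimately show ?thesis by (simp add: far_S1_def)
qed

lemma supp_S1_subset_sphere: "supp_S1 \<mu> \<subseteq> sphere 0 1"
  by (auto simp: supp_S1_def)

lemma emeasure_eq_0_if_disjoint_supp_S1:
  fixes \<mu> :: "complex measure"
  assumes sets: "sets \<mu> = sets borel" and A: "A \<in> sets borel" "A \<subseteq> sphere 0 1"
    and disjoint: "A \<inter> supp_S1 \<mu> = {}"
  shows "emeasure \<mu> A = 0"
proof -
  define \<F> where "\<F> = {ball y e | y e. e > 0 \<and> emeasure \<mu> (ball y e \<inter> sphere 0 1) = 0}"
  have "A \<subseteq> \<Union>\<F>"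
  proof
    fix y assume "y \<in> A"
    then have "y \<in> sphere 0 1" "y \<notin> supp_S1 \<mu>" using A disjoint by auto
    then obtain e where "e > 0" "emeasure \<mu> (ball y e \<inter> sphere 0 1) = 0"
      unfolding supp_S1_def by auto
    then show "y \<in> \<Union>\<F>" unfolding \<F>_def by (intro UnionI[of "ball y e"]) auto
  qed
  obtain \<F>' where \<F>': "\<F>' \<subseteq> \<F>" "countable \<F>'" "\<Union>\<F>' = \<Union>\<F>"
    using Lindelof[of \<F>] unfolding \<F>_def by blast
  have "(\<Union>B\<in>\<F>'. B \<inter> sphere 0 1) \<in> null_sets \<mu>"
    using \<F>' sets by (intro null_sets_UN') (auto simp: \<F>_def null_sets_def)
  moreover have "A \<subseteq> (\<Union>B\<in>\<F>'. B \<inter> sphere 0 1)" using \<open>A \<subseteq> \<Union>\<F>\<close> \<F>'(3) A(2) by blast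
  ultimately have "A \<in> null_sets \<mu>" using A(1) sets by (metis null_sets_subset)
  then show ?thesis by auto
qed

lemma supp_S1_degenerate:
  assumes "degenerate_with \<mu> r x" "r > 0" "x \<in> sphere 0 1"
  shows "supp_S1 \<mu> = {x, -x}"
proof -
  have ball_measure: "emeasure \<mu> (ball y e \<inter> sphere 0 1) =
      ennreal r * indicator (ball y e) x + ennreal r * indicator (ball y e) (-x)" for y e
    using assms(1,3) unfolding degenerate_with_def by (auto simp: indicator_def)
  have "y \<in> supp_S1 \<mu> \<longleftrightarrow> y = x \<or> y = -x" for y
  proof
    assume y: "y \<in> supp_S1 \<mu>"
    show "y = x \<or> y = -x"
    proof (rule ccontr)
      assume "\<not> (y = x \<or> y = -x)"
      then have "0 < min (dist y x) (dist y (-x))" (is "0 < ?e") by simp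
      then have "0 < emeasure \<mu> (ball y ?e \<inter> sphere 0 1)"
        using y by (auto simp: supp_S1_def)
      then show False using ball_measure[of y ?e] by simp
    qed
  next
    assume "y = x \<or> y = -x"
    then show "y \<in> supp_S1 \<mu>"
      using assms(2,3) ball_measure[of y] by (auto simp: supp_S1_def zero_less_iff_neq_zero)
  qed
  then show ?thesis by auto
qed

lemma emeasure_degenerate_eq_0:
  assumes "degenerate_with \<mu> r x" "sets \<mu> = sets borel"
    and "A \<subseteq> sphere 0 1" "x \<notin> A" "-x \<notin> A"
  shows "emeasure \<mu> A = 0"
proof (cases "A \<in> sets borel")
  case True
  then show ?thesis using assms unfolding degenerate_with_def by auto
next
  case False
  then show ?thesis using assms(2) by (simp add: emeasure_notin_sets)
qed

lemma sets_length_measure [simp]: "sets (length_measure d) = sets borel"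
  by (simp add: length_measure_def)

lemma AE_sgn_notin_if_length_measure_null:
  assumes d: "d \<in> borel_measurable (lebesgue_on {0..2*pi})"
    and A: "A \<in> sets borel" "emeasure (length_measure d) A = 0"
  shows "AE s in lebesgue_on {0..2*pi}. d s \<noteq> 0 \<longrightarrow> sgn (d s) \<notin> A"
proof -
  have "AE z in length_measure d. z \<notin> A"
    using A by (intro AE_not_in) (simp add: length_measure_def null_sets_def)
  then have "AE s in density (lebesgue_on {0..2*pi}) (\<lambda>s. ennreal (norm (d s))). sgn (d s) \<notin> A"
    unfolding length_measure_def sgn_eq[symmetric] using d A
    by (subst (asm) AE_distr_iff) auto
  then show ?thesis
    using d by (subst (asm) AE_density) auto
qed

lemma AE_eq_0_if_nonpos_integral_eq_0:
  fixes f :: "'a \<Rightarrow> real"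
  assumes "integrable M f" "integral\<^sup>L M f = 0" "AE s in M. f s \<le> 0"
  shows "AE s in M. f s = 0"
proof -
  have "AE s in M. - f s = 0"
    using integral_nonneg_eq_0_iff_AE[of M "\<lambda>s. - f s"] assms by auto
  then show ?thesis by simp
qed

lemma not_AE_eq_0_if_zero_set_null:
  assumes "{s \<in> S. f s = 0} \<in> null_sets lebesgue" "S \<in> sets lebesgue" "emeasure lebesgue S \<noteq> 0"
  shows "\<not> (AE s in lebesgue_on S. f s = 0)"
proof
  assume "AE s in lebesgue_on S. f s = 0"
  moreover have "AE s in lebesgue_on S. s \<notin> {s \<in> S. f s = 0}"
    using assms(1,2) by (intro AE_not_in) (auto simp: null_sets_restrict_space)
  ultimately have "AE s in lebesgue_on S. False"
    using AE_space by eventually_elim auto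
  then have "emeasure (lebesgue_on S) (space (lebesgue_on S)) = 0"
    using ae_filter_eq_bot_iff trivial_limit_def by metis
  then show False using assms(2,3) by (simp add: emeasure_restrict_space)
qed

lemma Re_cnj_mult_eq_norm_mult_sgn:
  fixes x z :: complex
  shows "Re (cnj x * z) = norm z * Re (cnj x * sgn z)"
  by (cases "z = 0") (simp_all add: field_simps)

lemma supp_S1_length_measure_meets_half_circle:
  fixes d :: "real \<Rightarrow> complex"
  assumes d_int: "d absolutely_integrable_on {0..2*pi}"
    and d_closed: "integral {0..2*pi} d = 0"
    and d_nonzero: "{s \<in> {0..2*pi}. d s = 0} \<in> null_sets lebesgue"
    and x: "x \<in> sphere 0 1"
    and perp_null: "emeasure (length_measure d) {\<i> * x, - (\<i> * x)} = 0"
  shows "\<exists>y \<in> supp_S1 (length_measure d). 0 < Re (cnj x * y)"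
proof (rule ccontr)
  assume no_y: "\<not> ?thesis"
  define M where "M = lebesgue_on {0..2*pi}"
  define H where "H = {y \<in> sphere 0 1. 0 < Re (cnj x * y)}"
  have d_M: "integrable M d"
    using absolutely_integrable_imp_integrable[OF d_int] by (simp add: M_def)
  then have d_meas: "d \<in> borel_measurable M" by auto
  have "H \<in> sets borel" unfolding H_def by measurable
  moreover have "emeasure (length_measure d) H = 0"
    using no_y \<open>H \<in> sets borel\<close>
    by (intro emeasure_eq_0_if_disjoint_supp_S1) (auto simp: H_def)
  ultimately have "AE s in M. d s \<noteq> 0 \<longrightarrow> sgn (d s) \<notin> H"
    using d_meas unfolding M_def by (intro AE_sgn_notin_if_length_measure_null)
  then have "AE s in M. Re (cnj x * d s) \<le> 0"
  proof eventually_elim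
    case (elim s)
    then have "Re (cnj x * sgn (d s)) \<le> 0" by (cases "d s = 0") (auto simp: H_def norm_sgn)
    then show ?case
      using Re_cnj_mult_eq_norm_mult_sgn[of x "d s"] mult_nonneg_nonpos[OF norm_ge_zero] by metis
  qed
  moreover have "integral\<^sup>L M (\<lambda>s. Re (cnj x * d s)) = 0"
    using d_M d_closed lebesgue_integral_eq_integral[of "{0..2*pi}" d] by (simp add: M_def)
  ultimately have "AE s in M. Re (cnj x * d s) = 0"
    using d_M by (intro AE_eq_0_if_nonpos_integral_eq_0) auto
  moreover have "AE s in M. d s \<noteq> 0 \<longrightarrow> sgn (d s) \<notin> {\<i> * x, - (\<i> * x)}"
    using d_meas perp_null unfolding M_def by (intro AE_sgn_notin_if_length_measure_null) auto
  ultimately have "AE s in M. d s = 0"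
  proof eventually_elim
    case (elim s)
    show "d s = 0"
    proof (rule ccontr)
      assume "d s \<noteq> 0"
      then have "Re (cnj x * sgn (d s)) = 0"
        using elim(1) Re_cnj_mult_eq_norm_mult_sgn[of x "d s"] by simp
      then show False
        using elim(2) \<open>d s \<noteq> 0\<close> sphere_orthogonal_iff[OF x, of "sgn (d s)"] by (simp add: norm_sgn)
    qed
  qed
  then show False
    unfolding M_def using not_AE_eq_0_if_zero_set_null[OF d_nonzero] by simp
qed

lemma convex_loopD:
  assumes "convex_loop c d"
  shows "d absolutely_integrable_on {0..2*pi}" "integral {0..2*pi} d = 0"
    and "{s \<in> {0..2*pi}. d s = 0} \<in> null_sets lebesgue"
proof -
  have periodic: "\<forall>t. c (t + 2*pi) = c t"
    and primitive: "\<forall>t\<in>{0..2*pi}. c t = c 0 + integral {0..t} d"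
    and "d absolutely_integrable_on {0..2*pi}"
    and "{s \<in> {0..2*pi}. d s = 0} \<in> null_sets lebesgue"
    using assms unfolding convex_loop_def by blast+
  then show "d absolutely_integrable_on {0..2*pi}" "{s \<in> {0..2*pi}. d s = 0} \<in> null_sets lebesgue"
    by blast+
  have "c (2*pi) = c 0" using periodic[rule_format, of 0] by simp
  moreover have "c (2*pi) = c 0 + integral {0..2*pi} d" by (rule primitive[rule_format]) simp
  ultimately show "integral {0..2*pi} d = 0" by simp
qed

lemma emeasure_far_S1_supp_length_measure_eq_0:
  assumes loop: "convex_loop c d" and degenerate: "degenerate_with \<mu> r x"
    and sets: "sets \<mu> = sets borel" and x: "x \<in> sphere 0 1"
    and perp_null: "emeasure (length_measure d) {\<i> * x, - (\<i> * x)} = 0"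
  shows "emeasure \<mu> (far_S1 (supp_S1 (length_measure d))) = 0"
proof (rule emeasure_degenerate_eq_0[OF degenerate sets])
  show "far_S1 (supp_S1 (length_measure d)) \<subseteq> sphere 0 1"
    by (auto simp: far_S1_def)
  have "z \<notin> far_S1 (supp_S1 (length_measure d))" if "z \<in> {x, -x}" for z
  proof -
    have z: "z \<in> sphere 0 1" using that x by auto
    have "{\<i> * z, - (\<i> * z)} = {\<i> * x, - (\<i> * x)}" using that by auto
    then obtain y where "y \<in> supp_S1 (length_measure d)" "0 < Re (cnj z * y)"
      using supp_S1_length_measure_meets_half_circle[OF convex_loopD[OF loop] z] perp_null by auto
    then show ?thesis using notin_far_S1[OF supp_S1_subset_sphere _ z] by blast
  qed
  then show "x \<notin> far_S1 (supp_S1 (length_measure d))" "-x \<notin> far_S1 (supp_S1 (length_measure d))"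
    by auto
qed

lemma weakly_admissible_commute: "weakly_admissible \<mu>0 \<mu>1 \<longleftrightarrow> weakly_admissible \<mu>1 \<mu>0"
  by (auto simp: weakly_admissible_def)

theorem corollary3p3:
  fixes c d :: "nat \<Rightarrow> real \<Rightarrow> complex" and j :: nat and r :: real and x :: complex
  assumes "convex_loop (c 0) (d 0)" and "convex_loop (c 1) (d 1)"
    and "j \<in> {0, 1}"
    and "r > 0" and "x \<in> sphere 0 1"
    and "degenerate_with (length_measure (d j)) r x"
  shows "weakly_admissible (length_measure (d 0)) (length_measure (d 1)) \<longleftrightarrow>
         emeasure (length_measure (d (1 - j))) {\<i> * x, - (\<i> * x)} = 0"
proof -
  let ?\<mu>i = "length_measure (d (1 - j))" and ?\<mu>j = "length_measure (d j)"
  have loop_i: "convex_loop (c (1 - j)) (d (1 - j))" using assms(1-3) by auto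
  have "emeasure ?\<mu>i (far_S1 (supp_S1 ?\<mu>j)) = emeasure ?\<mu>i {\<i> * x, - (\<i> * x)}"
    using supp_S1_degenerate[OF assms(6,4,5)] far_S1_antipodal[OF assms(5)] by simp
  moreover have "emeasure ?\<mu>i {\<i> * x, - (\<i> * x)} = 0 \<Longrightarrow> emeasure ?\<mu>j (far_S1 (supp_S1 ?\<mu>i)) = 0"
    using emeasure_far_S1_supp_length_measure_eq_0[OF loop_i assms(6) _ assms(5)] by simp
  ultimately have admissible_iff:
    "weakly_admissible ?\<mu>i ?\<mu>j \<longleftrightarrow> emeasure ?\<mu>i {\<i> * x, - (\<i> * x)} = 0"
    by (auto simp: weakly_admissible_iff_far_S1)
  from assms(3) consider "j = 0" | "j = 1" by blast
  then show ?thesis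
  proof cases
    case 1
    then show ?thesis
      using admissible_iff weakly_admissible_commute[of "length_measure (d 0)" "length_measure (d 1)"]
      by simp
  next
    case 2
    then show ?thesis using admissible_iff by simp
  qed
qed

end
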